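(* Consider $K$ arms with reward distributions supported on $[0,1]$, labeled so that $\sigma_1^2>\sigma_2^2\ge\dots\ge\sigma_K^2$ (arm $1=*$ is the unique arm of maximal variance), with gaps $\delta_i=\sigma_1^2-\sigma_i^2$. Run the sequential halving algorithm SHVV with budget $n$: starting from the set of all arms, for $\lceil\log_2 K\rceil$ rounds, every arm in the current set $A_r$ is pulled $t_r=\frac{n}{|A_r|\log_2 K}$ times, the empirical variance of these $t_r$ rewards is computed for each arm, and the $\lceil|A_r|/2\rceil$ arms with largest empirical variance form $A_{r+1}$; the single remaining arm $J_n$ is output. Let $e_n=\mathbb{P}(J_n\ne * )$ and $H_2=\max_{i\ne *}\frac{i}{\delta_i^2}$. Then $$e_n\le 3\log_2(K)\exp\Big(\frac{-(n-K\log_2 K)^2}{8\,n\log_2(K)\,H_2}\Big).$$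
   Context: Rewards are independent across arms and pulls. The empirical variance is the sample variance of the round's samples. *)

theory Defs
  imports "HOL-Probability.Probability"
begin

text \<open>Arms are labelled 1..K. Reward distribution of arm i is D i (a measure on the reals).
  Outside 1..K we put a dummy point mass so the product measure is well defined.\<close>
definition arm_dist :: "nat \<Rightarrow> (nat \<Rightarrow> real measure) \<Rightarrow> nat \<Rightarrow> real measure" where
  "arm_dist K D i = (if i \<in> {1..K} then D i else return borel 0)"

definition arm_var :: "(nat \<Rightarrow> real measure) \<Rightarrow> nat \<Rightarrow> real" where
  "arm_var D i = (\<integral>x. (x - (\<integral>y. y \<partial>D i))\<^sup>2 \<partial>D i)"

text \<open>Sample space: omega (r, i, j) is the j-th reward of arm i in round r; all independent.\<close>
definition sample_space :: "nat \<Rightarrow> (nat \<Rightarrow> real measure) \<Rightarrow> (nat \<times> nat \<times> nat \<Rightarrow> real) measure" where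
  "sample_space K D = (\<Pi>\<^sub>M idx\<in>UNIV. arm_dist K D (fst (snd idx)))"

definition emp_var :: "(nat \<Rightarrow> real) \<Rightarrow> nat \<Rightarrow> real" where
  "emp_var x t = (if t \<le> 1 then 0 else
     (let m = (\<Sum>j<t. x j) / real t in (\<Sum>j<t. (x j - m)\<^sup>2) / (real t - 1)))"

text \<open>Keep the ceil(|A|/2) arms of largest empirical variance v; ties are broken against
  the arm of smaller index (i.e. against the optimal arm 1).\<close>
definition halve :: "nat set \<Rightarrow> (nat \<Rightarrow> real) \<Rightarrow> nat set" where
  "halve A v = {i \<in> A. card {j \<in> A. v i < v j \<or> (v j = v i \<and> i < j)} < (card A + 1) div 2}"

definition pulls :: "nat \<Rightarrow> nat \<Rightarrow> nat \<Rightarrow> nat" where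
  "pulls K n m = nat \<lfloor>real n / (real m * log 2 (real K))\<rfloor>"

primrec shvv_set :: "nat \<Rightarrow> nat \<Rightarrow> (nat \<times> nat \<times> nat \<Rightarrow> real) \<Rightarrow> nat \<Rightarrow> nat set" where
  "shvv_set K n \<omega> 0 = {1..K}"
| "shvv_set K n \<omega> (Suc r) =
     (let A = shvv_set K n \<omega> r
      in halve A (\<lambda>i. emp_var (\<lambda>j. \<omega> (r, i, j)) (pulls K n (card A))))"

definition shvv_out :: "nat \<Rightarrow> nat \<Rightarrow> (nat \<times> nat \<times> nat \<Rightarrow> real) \<Rightarrow> nat" where
  "shvv_out K n \<omega> = Min (shvv_set K n \<omega> (nat \<lceil>log 2 (real K)\<rceil>))"

end

theory Submission
  imports Defs
begin

text \<open>
  Arm 1 can only be lost in a round r in which it is still active. If it is eliminated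
  among m active arms, at least \<lceil>m/2\<rceil> other active arms have an empirical variance at
  least as large as its own, hence at least \<lceil>m/2\<rceil> - \<lfloor>m/4\<rfloor> of them are weak, i.e. not
  among the \<lfloor>m/4\<rfloor> active arms of smallest index. There are at most
  m - 1 - \<lfloor>m/4\<rfloor> \<le> 3 (\<lceil>m/2\<rceil> - \<lfloor>m/4\<rfloor>) weak arms and the active set is independent of the
  samples of round r, so by Markov's inequality the loss costs at most three times the largest
  probability that a weak arm j beats arm 1. Weak arms have index j \<ge> m/4 + 2, so their
  gaps satisfy \<delta>_j^2 \<ge> j / H_2 \<ge> (m/4 + 2) / H_2.

  For a single comparison with t samples each, Hoeffding's device for U-statistics writes the
  difference of the two sample variances as an average over all permutations of the samples of
  sums of \<lfloor>t/2\<rfloor> independent variables ((x_a - x_b)^2 - (y_a - y_b)^2) / 2, which take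
  values in [-1/2, 1/2] and have mean \<delta>_j. Convexity of exp and Hoeffding's lemma bound the
  probability that arm j wins by exp (-2 \<lfloor>t/2\<rfloor> \<delta>_j^2). A union bound over the
  \<lceil>log_2 K\<rceil> rounds and an elementary comparison of exponents give the theorem.
\<close>

section \<open>Sample variances as averages over random pairings\<close>

lemma emp_var_eq_pairwise:
  fixes x :: "nat \<Rightarrow> real"
  assumes t: "t \<ge> 2"
  shows "emp_var x t = (\<Sum>a<t. \<Sum>b<t. (x a - x b)\<^sup>2) / (2 * real t * (real t - 1))"
proof -
  define S where "S = (\<Sum>j<t. x j)"
  define Q where "Q = (\<Sum>j<t. (x j)\<^sup>2)"
  have tpos: "real t > 0" "real t - 1 > 0" using t by auto
  have pairs: "(\<Sum>a<t. \<Sum>b<t. (x a - x b)\<^sup>2) = 2 * real t * Q - 2 * S\<^sup>2"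
  proof -
    have "(\<Sum>a<t. \<Sum>b<t. (x a - x b)\<^sup>2) = (\<Sum>a<t. \<Sum>b<t. (x a)\<^sup>2 + (x b)\<^sup>2 - 2 * x a * x b)"
      by (intro sum.cong refl) (simp add: power2_diff)
    also have "\<dots> = (\<Sum>a<t. real t * (x a)\<^sup>2 + Q - 2 * x a * S)"
      by (intro sum.cong refl) (simp add: sum.distrib sum_subtractf Q_def S_def sum_distrib_left)
    also have "\<dots> = real t * Q + real t * Q - 2 * S * S"
      by (simp add: sum.distrib sum_subtractf Q_def S_def sum_distrib_left sum_distrib_right
          mult.assoc mult.commute mult.left_commute)
    finally show ?thesis by (simp add: power2_eq_square)
  qed
  have centred: "(\<Sum>j<t. (x j - S / real t)\<^sup>2) = Q - S\<^sup>2 / real t"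
  proof -
    have "(\<Sum>j<t. (x j - S / real t)\<^sup>2) = (\<Sum>j<t. (x j)\<^sup>2 - 2 * (S / real t) * x j + (S / real t)\<^sup>2)"
      by (intro sum.cong refl) (simp add: power2_diff)
    also have "\<dots> = Q - 2 * (S / real t) * S + real t * (S / real t)\<^sup>2"
      by (simp add: sum.distrib sum_subtractf Q_def S_def sum_distrib_left)
    also have "\<dots> = Q - S\<^sup>2 / real t"
      using tpos by (simp add: field_simps power2_eq_square)
    finally show ?thesis .
  qed
  show ?thesis
    using t tpos unfolding emp_var_def Let_def S_def[symmetric] centred pairs
    by (simp add: field_simps power2_eq_square)
qed

lemma permutes_map_pair_exists:
  assumes "a \<in> S" "b \<in> S" "a' \<in> S" "b' \<in> S" "a \<noteq> b" "a' \<noteq> b'"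
  shows "\<exists>\<tau>. \<tau> permutes S \<and> \<tau> a = a' \<and> \<tau> b = b'"
proof -
  define \<tau>1 where "\<tau>1 = Transposition.transpose a a'"
  define \<tau>2 where "\<tau>2 = Transposition.transpose (\<tau>1 b) b'"
  have p1: "\<tau>1 permutes S" unfolding \<tau>1_def using assms by (intro permutes_swap_id) auto
  have "\<tau>1 b \<in> S" using p1 assms(2) by (simp add: permutes_in_image)
  with assms have p2: "\<tau>2 permutes S" unfolding \<tau>2_def by (intro permutes_swap_id) auto
  have "\<tau>1 b \<noteq> a'" unfolding \<tau>1_def using assms by (auto simp: Transposition.transpose_def)
  then have "(\<tau>2 \<circ> \<tau>1) a = a' \<and> (\<tau>2 \<circ> \<tau>1) b = b'"
    using assms(6) by (simp add: \<tau>1_def \<tau>2_def Transposition.transpose_def)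
  then show ?thesis using permutes_compose[OF p1 p2] by blast
qed

lemma card_permutes_pair_image_eq:
  assumes fin: "finite S"
    and ab: "a \<in> S" "b \<in> S" "a \<noteq> b" and ab': "a' \<in> S" "b' \<in> S" "a' \<noteq> b'"
  shows "card {\<pi>. \<pi> permutes S \<and> \<pi> p = a \<and> \<pi> q = b} = card {\<pi>. \<pi> permutes S \<and> \<pi> p = a' \<and> \<pi> q = b'}"
proof -
  have le: "card {\<pi>. \<pi> permutes S \<and> \<pi> p = a \<and> \<pi> q = b} \<le> card {\<pi>. \<pi> permutes S \<and> \<pi> p = a' \<and> \<pi> q = b'}"
    if pairs: "a \<in> S" "b \<in> S" "a \<noteq> b" "a' \<in> S" "b' \<in> S" "a' \<noteq> b'" for a b a' b'
  proof -
    obtain \<tau> where \<tau>: "\<tau> permutes S" "\<tau> a = a'" "\<tau> b = b'"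
      using permutes_map_pair_exists[of a S b a' b'] pairs by blast
    have "inj ((\<circ>) \<tau>)"
      using permutes_inj[OF \<tau>(1)] by (simp add: fun.inj_map)
    moreover have "(\<circ>) \<tau> ` {\<pi>. \<pi> permutes S \<and> \<pi> p = a \<and> \<pi> q = b}
        \<subseteq> {\<pi>. \<pi> permutes S \<and> \<pi> p = a' \<and> \<pi> q = b'}"
      using \<tau> by (auto intro: permutes_compose)
    moreover have "finite {\<pi>. \<pi> permutes S \<and> \<pi> p = a' \<and> \<pi> q = b'}"
      using finite_permutations[OF fin] by (rule finite_subset[rotated]) auto
    ultimately show ?thesis
      by (intro card_inj_on_le) (auto intro: inj_on_subset)
  qed
  show ?thesis using le[OF ab ab'] le[OF ab' ab] by simp
qed

lemma sum_permutes_pair: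
  fixes h :: "'a \<Rightarrow> 'a \<Rightarrow> real"
  assumes fin: "finite S" and pq: "p \<in> S" "q \<in> S" "p \<noteq> q"
  shows "real (card S) * (real (card S) - 1) * (\<Sum>\<pi>\<in>{\<pi>. \<pi> permutes S}. h (\<pi> p) (\<pi> q))
       = fact (card S) * (\<Sum>a\<in>S. \<Sum>b\<in>S-{a}. h a b)"
proof -
  define P where "P = {\<pi>. \<pi> permutes S}"
  define Pr where "Pr = Sigma S (\<lambda>a. S - {a})"
  define F where "F = (\<lambda>ab. {\<pi>. \<pi> permutes S \<and> \<pi> p = fst ab \<and> \<pi> q = snd ab})"
  define N where "N = card (F (p, q))"
  have finP: "finite P" using finite_permutations[OF fin] by (simp add: P_def)
  have finPr: "finite Pr" using fin by (simp add: Pr_def)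
  have img: "(\<lambda>\<pi>. (\<pi> p, \<pi> q)) ` P \<subseteq> Pr"
    using pq by (auto simp: P_def Pr_def permutes_in_image dest: permutes_inj injD)
  have cardF: "card (F ab) = N" if "ab \<in> Pr" for ab
    using that pq unfolding F_def N_def Pr_def
    by (intro card_permutes_pair_image_eq[OF fin]) auto
  have group: "(\<Sum>ab\<in>Pr. sum f (F ab)) = sum f P" for f :: "('a \<Rightarrow> 'a) \<Rightarrow> real"
    using sum.group[OF finP finPr img, of f] by (simp add: F_def P_def prod_eq_iff conj_commute)
  have sum_P: "(\<Sum>\<pi>\<in>P. h (\<pi> p) (\<pi> q)) = real N * (\<Sum>ab\<in>Pr. h (fst ab) (snd ab))"
  proof -
    have "(\<Sum>\<pi>\<in>F ab. h (\<pi> p) (\<pi> q)) = real N * h (fst ab) (snd ab)" if "ab \<in> Pr" for ab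
    proof -
      have "(\<Sum>\<pi>\<in>F ab. h (\<pi> p) (\<pi> q)) = (\<Sum>\<pi>\<in>F ab. h (fst ab) (snd ab))"
        by (intro sum.cong refl) (auto simp: F_def)
      then show ?thesis using cardF[OF that] by simp
    qed
    then show ?thesis
      unfolding group[symmetric] sum_distrib_left by (intro sum.cong refl) auto
  qed
  have card_P: "fact (card S) = real N * real (card Pr)"
  proof -
    have "card P = fact (card S)"
      unfolding P_def by (rule card_permutations[OF refl fin])
    moreover have "real (card P) = (\<Sum>ab\<in>Pr. real (card (F ab)))"
      using group[of "\<lambda>_. 1"] by simp
    ultimately show ?thesis using cardF by simp
  qed
  have "card S \<ge> 1" using fin pq(1) by (metis One_nat_def Suc_leI card_gt_0_iff empty_iff)
  then have card_Pr: "real (card Pr) = real (card S) * (real (card S) - 1)"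
    using fin by (simp add: Pr_def card_Diff_singleton of_nat_diff)
  have "real (card S) * (real (card S) - 1) * (\<Sum>\<pi>\<in>P. h (\<pi> p) (\<pi> q))
      = real (card Pr) * real N * (\<Sum>ab\<in>Pr. h (fst ab) (snd ab))"
    by (simp add: card_Pr sum_P)
  also have "\<dots> = fact (card S) * (\<Sum>a\<in>S. \<Sum>b\<in>S-{a}. h a b)"
    unfolding card_P Pr_def using fin by (subst sum.Sigma) (auto simp: split_beta)
  finally show ?thesis unfolding P_def .
qed

lemma sum_permutes_pairing:
  fixes h :: "nat \<Rightarrow> nat \<Rightarrow> real"
  assumes kt: "2 * k \<le> t"
  shows "real t * (real t - 1) * (\<Sum>\<pi>\<in>{\<pi>. \<pi> permutes {..<t}}. \<Sum>i<k. h (\<pi> (2*i)) (\<pi> (2*i+1)))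
       = real k * fact t * (\<Sum>a<t. \<Sum>b\<in>{..<t}-{a}. h a b)"
proof -
  have "real t * (real t - 1) * (\<Sum>\<pi>\<in>{\<pi>. \<pi> permutes {..<t}}. \<Sum>i<k. h (\<pi> (2*i)) (\<pi> (2*i+1)))
      = (\<Sum>i<k. real t * (real t - 1) * (\<Sum>\<pi>\<in>{\<pi>. \<pi> permutes {..<t}}. h (\<pi> (2*i)) (\<pi> (2*i+1))))"
    by (subst sum.swap) (simp add: sum_distrib_left)
  also have "\<dots> = (\<Sum>i<k. fact t * (\<Sum>a<t. \<Sum>b\<in>{..<t}-{a}. h a b))"
  proof (intro sum.cong refl)
    fix i assume "i \<in> {..<k}"
    then have "2*i \<in> {..<t}" "2*i+1 \<in> {..<t}" "2*i \<noteq> 2*i+1" using kt by auto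
    from sum_permutes_pair[OF _ this, of h]
    show "real t * (real t - 1) * (\<Sum>\<pi>\<in>{\<pi>. \<pi> permutes {..<t}}. h (\<pi> (2*i)) (\<pi> (2*i+1)))
        = fact t * (\<Sum>a<t. \<Sum>b\<in>{..<t}-{a}. h a b)" by simp
  qed
  finally show ?thesis by simp
qed

text \<open>Half the squared difference of two samples of an arm is an unbiased estimator of its
  variance, so for a \<noteq> b this has mean arm_var D 1 - arm_var D j.\<close>
definition pair_gain :: "nat \<Rightarrow> nat \<Rightarrow> (nat \<times> nat \<times> nat \<Rightarrow> real) \<Rightarrow> nat \<Rightarrow> nat \<Rightarrow> real" where
  "pair_gain r j \<omega> a b = ((\<omega> (r,1,a) - \<omega> (r,1,b))\<^sup>2 - (\<omega> (r,j,a) - \<omega> (r,j,b))\<^sup>2) / 2"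

definition pairing_gain :: "nat \<Rightarrow> nat \<Rightarrow> nat \<Rightarrow> (nat \<Rightarrow> nat) \<Rightarrow> (nat \<times> nat \<times> nat \<Rightarrow> real) \<Rightarrow> real" where
  "pairing_gain r j k \<pi> \<omega> = (\<Sum>i<k. pair_gain r j \<omega> (\<pi> (2*i)) (\<pi> (2*i+1)))"

lemma emp_var_diff_eq_pairing_gain_average:
  assumes t: "t \<ge> 2" and kt: "2 * k \<le> t"
  shows "real k * (emp_var (\<lambda>a. \<omega> (r,1,a)) t - emp_var (\<lambda>a. \<omega> (r,j,a)) t)
     = (\<Sum>\<pi>\<in>{\<pi>. \<pi> permutes {..<t}}. pairing_gain r j k \<pi> \<omega>) / fact t"
proof -
  define G where "G = (\<Sum>a<t. \<Sum>b\<in>{..<t}-{a}. pair_gain r j \<omega> a b)"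
  define T where "T = real t * (real t - 1)"
  have T: "T > 0" using t by (simp add: T_def)
  have "(\<Sum>a<t. \<Sum>b<t. (\<omega> (r,1,a) - \<omega> (r,1,b))\<^sup>2) - (\<Sum>a<t. \<Sum>b<t. (\<omega> (r,j,a) - \<omega> (r,j,b))\<^sup>2)
      = (\<Sum>a<t. \<Sum>b<t. (\<omega> (r,1,a) - \<omega> (r,1,b))\<^sup>2 - (\<omega> (r,j,a) - \<omega> (r,j,b))\<^sup>2)"
    by (simp add: sum_subtractf)
  also have "\<dots> = (\<Sum>a<t. \<Sum>b<t. 2 * pair_gain r j \<omega> a b)"
    by (intro sum.cong refl) (simp add: pair_gain_def)
  also have "\<dots> = 2 * (\<Sum>a<t. \<Sum>b<t. pair_gain r j \<omega> a b)"
    by (simp add: sum_distrib_left)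
  also have "(\<Sum>a<t. \<Sum>b<t. pair_gain r j \<omega> a b) = G"
    unfolding G_def
  proof (rule sum.cong[OF refl])
    fix a assume "a \<in> {..<t}"
    then show "(\<Sum>b<t. pair_gain r j \<omega> a b) = (\<Sum>b\<in>{..<t}-{a}. pair_gain r j \<omega> a b)"
      using sum.remove[of "{..<t}" a "pair_gain r j \<omega> a"] by (simp add: pair_gain_def)
  qed
  finally have diff: "emp_var (\<lambda>a. \<omega> (r,1,a)) t - emp_var (\<lambda>a. \<omega> (r,j,a)) t = G / T"
    unfolding emp_var_eq_pairwise[OF t] T_def by (simp add: diff_divide_distrib[symmetric] mult.assoc)
  have "T * (\<Sum>\<pi>\<in>{\<pi>. \<pi> permutes {..<t}}. pairing_gain r j k \<pi> \<omega>) = real k * fact t * G"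
    unfolding pairing_gain_def G_def T_def by (rule sum_permutes_pairing[OF kt])
  then show ?thesis
    unfolding diff using T by (simp add: field_simps)
qed

lemma exp_emp_var_diff_le_average:
  assumes t: "t \<ge> 2"
  shows "exp (- s * (real (t div 2) * (emp_var (\<lambda>a. \<omega> (r,1,a)) t - emp_var (\<lambda>a. \<omega> (r,j,a)) t)))
    \<le> (\<Sum>\<pi>\<in>{\<pi>. \<pi> permutes {..<t}}. 1 / fact t * exp (- s * pairing_gain r j (t div 2) \<pi> \<omega>))"
proof -
  define P where "P = {\<pi>. \<pi> permutes ({..<t}::nat set)}"
  have "finite P" unfolding P_def by (rule finite_permutations) simp
  have card_P: "card P = fact t" unfolding P_def using card_permutations[of "{..<t}" t] by simp
  then have "P \<noteq> {}" by (metis card.empty fact_nonzero)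
  have kt: "2 * (t div 2) \<le> t" by simp
  have "- s * (real (t div 2) * (emp_var (\<lambda>a. \<omega> (r,1,a)) t - emp_var (\<lambda>a. \<omega> (r,j,a)) t))
      = (\<Sum>\<pi>\<in>P. (1 / fact t) *\<^sub>R (- s * pairing_gain r j (t div 2) \<pi> \<omega>))"
    unfolding emp_var_diff_eq_pairing_gain_average[OF t kt] P_def
    by (simp add: sum_distrib_left sum_divide_distrib)
  also have "exp \<dots> \<le> (\<Sum>\<pi>\<in>P. 1 / fact t * exp (- s * pairing_gain r j (t div 2) \<pi> \<omega>))"
    using card_P \<open>P \<noteq> {}\<close> by (intro convex_on_sum[OF \<open>finite P\<close> _ exp_convex]) auto
  finally show ?thesis unfolding P_def .
qed

section \<open>Sequential halving\<close>

lemma card_rank_less: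
  fixes R :: "'a \<Rightarrow> 'a \<Rightarrow> bool"
  assumes fin: "finite A"
    and irrefl: "\<And>i. i \<in> A \<Longrightarrow> \<not> R i i"
    and trans: "\<And>i j l. i \<in> A \<Longrightarrow> j \<in> A \<Longrightarrow> l \<in> A \<Longrightarrow> R i j \<Longrightarrow> R j l \<Longrightarrow> R i l"
    and total: "\<And>i j. i \<in> A \<Longrightarrow> j \<in> A \<Longrightarrow> i \<noteq> j \<Longrightarrow> R i j \<or> R j i"
  shows "card {i \<in> A. card {j \<in> A. R i j} < c} = min c (card A)"
proof -
  define rk where "rk i = card {j \<in> A. R i j}" for i
  have less: "rk i' < rk i" if "i \<in> A" "i' \<in> A" "R i i'" for i i'
  proof -
    have "{j \<in> A. R i' j} \<subset> {j \<in> A. R i j}"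
      using that trans irrefl by blast
    then show ?thesis unfolding rk_def by (rule psubset_card_mono[rotated]) (use fin in auto)
  qed
  have inj: "inj_on rk A"
    using less total by (metis inj_onI less_irrefl)
  have "rk ` A \<subseteq> {..<card A}"
    using irrefl fin by (auto simp: rk_def intro!: psubset_card_mono)
  then have img: "rk ` A = {..<card A}"
    using card_image[OF inj] by (intro card_subset_eq) auto
  have "card {i \<in> A. rk i < c} = card (rk ` {i \<in> A. rk i < c})"
    by (rule card_image[symmetric]) (rule inj_on_subset[OF inj], auto)
  also have "rk ` {i \<in> A. rk i < c} = rk ` A \<inter> {..<c}"
    by auto
  also have "\<dots> = {..<min c (card A)}"
    unfolding img by auto
  finally show ?thesis unfolding rk_def by simp
qed

lemma halve_subset: "halve A v \<subseteq> A"
  unfolding halve_def by auto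

lemma card_halve:
  assumes "finite A"
  shows "card (halve A v) = (card A + 1) div 2"
proof -
  have "card (halve A v) = min ((card A + 1) div 2) (card A)"
    unfolding halve_def
  proof (rule card_rank_less[OF assms])
    fix i j :: nat assume "i \<noteq> j"
    then show "(v i < v j \<or> v j = v i \<and> i < j) \<or> v j < v i \<or> v i = v j \<and> j < i"
      by (cases "v i = v j") (auto simp: neq_iff)
  qed auto
  then show ?thesis by simp
qed

lemma card_beating_if_not_in_halve:
  assumes "i \<in> A" "\<forall>j\<in>A. i \<le> j" "i \<notin> halve A v"
  shows "(card A + 1) div 2 \<le> card {j \<in> A - {i}. v i \<le> v j}"
proof -
  have "{j \<in> A. v i < v j \<or> (v j = v i \<and> i < j)} = {j \<in> A - {i}. v i \<le> v j}"
    using assms(2) by force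
  then show ?thesis using assms(1,3) unfolding halve_def by auto
qed

primrec active_count :: "nat \<Rightarrow> nat \<Rightarrow> nat" where
  "active_count K 0 = K"
| "active_count K (Suc r) = (active_count K r + 1) div 2"

lemma active_count_pos: "K \<ge> 1 \<Longrightarrow> active_count K r \<ge> 1"
  by (induction r) auto

lemma active_count_le: "active_count K r \<le> K"
  by (induction r) auto

lemma shvv_set_subset: "shvv_set K n \<omega> r \<subseteq> {1..K}"
  by (induction r) (auto simp: Let_def dest: halve_subset[THEN subsetD])

lemma card_shvv_set: "card (shvv_set K n \<omega> r) = active_count K r"
proof (induction r)
  case (Suc r)
  have "finite (shvv_set K n \<omega> r)"
    using shvv_set_subset[of K n \<omega> r] finite_subset by blast
  then show ?case using Suc by (simp add: Let_def card_halve)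
qed simp

lemma shvv_set_cong:
  assumes "\<And>idx. fst idx < r \<Longrightarrow> \<omega> idx = \<omega>' idx"
  shows "shvv_set K n \<omega> r = shvv_set K n \<omega>' r"
  using assms
proof (induction r)
  case (Suc r)
  then have "shvv_set K n \<omega> r = shvv_set K n \<omega>' r" by simp
  moreover have "(\<lambda>i. emp_var (\<lambda>j. \<omega> (r, i, j)) t) = (\<lambda>i. emp_var (\<lambda>j. \<omega>' (r, i, j)) t)" for t
    using Suc.prems by simp
  ultimately show ?case by (simp add: Let_def)
qed simp

text \<open>The set A' of the paper: the active arms other than arm 1 and its q best competitors,
  which are those of smallest index because arms are sorted by variance. It is empty once
  arm 1 is inactive.\<close>
definition weak_arms :: "nat set \<Rightarrow> nat \<Rightarrow> nat set" where
  "weak_arms A q = (if 1 \<in> A then {j \<in> A - {1}. q \<le> card {i \<in> A - {1}. i < j}} else {})"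

lemma weak_arms_subset: "weak_arms A q \<subseteq> A - {1}"
  unfolding weak_arms_def by auto

lemma weak_arms_index_ge:
  assumes "0 \<notin> A" "j \<in> weak_arms A q"
  shows "q + 2 \<le> j"
proof -
  have j: "j \<in> A" "j \<noteq> 1" "q \<le> card {i \<in> A - {1}. i < j}"
    using assms(2) by (auto simp: weak_arms_def split: if_splits)
  have two_le: "2 \<le> i" if "i \<in> A" "i \<noteq> 1" for i
    using that assms(1) by (cases "i = 0") auto
  then have "{i \<in> A - {1}. i < j} \<subseteq> {2..<j}"
    by auto
  then have "card {i \<in> A - {1}. i < j} \<le> j - 2"
    using card_mono[of "{2..<j}"] by fastforce
  moreover have "j \<ge> 2" using j two_le by blast
  ultimately show ?thesis using j(3) by linarith
qed

lemma weak_arms_shvv_set_subset: "weak_arms (shvv_set K n \<omega> r) q \<subseteq> {2..K}"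
proof
  fix j assume "j \<in> weak_arms (shvv_set K n \<omega> r) q"
  then have "j \<in> shvv_set K n \<omega> r - {1}"
    using weak_arms_subset[of "shvv_set K n \<omega> r" q] by blast
  then show "j \<in> {2..K}"
    using shvv_set_subset[of K n \<omega> r] by fastforce
qed

lemma card_diff_weak_arms:
  assumes "finite A" "1 \<in> A"
  shows "card (A - {1} - weak_arms A q) = min q (card A - 1)"
proof -
  have "A - {1} - weak_arms A q = {j \<in> A - {1}. card {i \<in> A - {1}. i < j} < q}"
    using assms(2) by (auto simp: weak_arms_def)
  also have "card \<dots> = min q (card (A - {1}))"
    by (rule card_rank_less) (use assms in auto)
  finally show ?thesis using assms by simp
qed

lemma card_weak_arms_le:
  assumes "finite A"
  shows "card (weak_arms A q) \<le> card A - 1 - q"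
proof (cases "1 \<in> A")
  case True
  have "card (weak_arms A q) \<le> card (A - {1})"
    using weak_arms_subset[of A q] assms by (intro card_mono) auto
  then have "card (weak_arms A q) = card (A - {1}) - card (A - {1} - weak_arms A q)"
    using card_Diff_subset[of "weak_arms A q" "A - {1}"] weak_arms_subset[of A q] assms
    by (simp add: finite_subset diff_diff_cancel)
  also have "\<dots> = card A - 1 - q"
    using card_diff_weak_arms[OF assms True, of q] assms True by simp
  finally show ?thesis by simp
qed (simp add: weak_arms_def)

lemma card_le_card_Int_weak_arms:
  assumes "finite A" "1 \<in> A" "W \<subseteq> A - {1}"
  shows "card W \<le> card (W \<inter> weak_arms A q) + q"
proof -
  have "card W \<le> card (W \<inter> weak_arms A q) + card (W - weak_arms A q)"
    by (metis Int_Diff_Un card_Un_le)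
  also have "card (W - weak_arms A q) \<le> card (A - {1} - weak_arms A q)"
    by (rule card_mono) (use assms in auto)
  also have "\<dots> \<le> q"
    using card_diff_weak_arms[OF assms(1,2), of q] by simp
  finally show ?thesis by simp
qed

lemma card_weak_arms_beating_ge:
  assumes "finite A" "1 \<in> A" "0 \<notin> A" "1 \<notin> halve A v"
  shows "(card A + 1) div 2 \<le> card {j \<in> weak_arms A q. v 1 \<le> v j} + q"
proof -
  have "\<forall>j\<in>A. 1 \<le> j" using assms(3) by (metis One_nat_def Suc_leI gr0I)
  then have "(card A + 1) div 2 \<le> card {j \<in> A - {1}. v 1 \<le> v j}"
    using card_beating_if_not_in_halve assms(2,4) by blast
  also have "\<dots> \<le> card ({j \<in> A - {1}. v 1 \<le> v j} \<inter> weak_arms A q) + q"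
    by (rule card_le_card_Int_weak_arms) (use assms in auto)
  also have "{j \<in> A - {1}. v 1 \<le> v j} \<inter> weak_arms A q = {j \<in> weak_arms A q. v 1 \<le> v j}"
    using weak_arms_subset[of A q] by blast
  finally show ?thesis .
qed

definition beats_best :: "nat \<Rightarrow> nat \<Rightarrow> nat \<Rightarrow> (nat \<times> nat \<times> nat \<Rightarrow> real) set" where
  "beats_best r t j = {\<omega>. emp_var (\<lambda>a. \<omega> (r,1,a)) t \<le> emp_var (\<lambda>a. \<omega> (r,j,a)) t}"

definition loses_best :: "nat \<Rightarrow> nat \<Rightarrow> nat \<Rightarrow> (nat \<times> nat \<times> nat \<Rightarrow> real) set" where
  "loses_best K n r = {\<omega>. 1 \<in> shvv_set K n \<omega> r \<and> 1 \<notin> shvv_set K n \<omega> (Suc r)}"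

lemma ex_step_true_to_false: "P 0 \<Longrightarrow> \<not> P R \<Longrightarrow> \<exists>r<R. P r \<and> \<not> P (Suc r)"
  by (induction R) (auto intro: less_SucI)

lemma shvv_out_ne_best_subset:
  assumes "K \<ge> 1"
  shows "{\<omega>. shvv_out K n \<omega> \<noteq> 1} \<subseteq> (\<Union>r<nat \<lceil>log 2 (real K)\<rceil>. loses_best K n r)"
proof
  fix \<omega> assume \<omega>: "\<omega> \<in> {\<omega>. shvv_out K n \<omega> \<noteq> 1}"
  define R where "R = nat \<lceil>log 2 (real K)\<rceil>"
  have "1 \<notin> shvv_set K n \<omega> R"
  proof
    assume "1 \<in> shvv_set K n \<omega> R"
    moreover have "finite (shvv_set K n \<omega> R)" "\<forall>i\<in>shvv_set K n \<omega> R. 1 \<le> i"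
      using shvv_set_subset[of K n \<omega> R] finite_subset by auto
    ultimately have "Min (shvv_set K n \<omega> R) = 1"
      by (intro Min_eqI) auto
    then show False using \<omega> by (simp add: shvv_out_def R_def)
  qed
  moreover have "1 \<in> shvv_set K n \<omega> 0" using assms by simp
  ultimately obtain r where "r < R" "1 \<in> shvv_set K n \<omega> r" "1 \<notin> shvv_set K n \<omega> (Suc r)"
    using ex_step_true_to_false[of "\<lambda>r. 1 \<in> shvv_set K n \<omega> r" R] by blast
  then show "\<omega> \<in> (\<Union>r<R. loses_best K n r)"
    by (auto simp: loses_best_def)
qed

lemma sets_halve_eq:
  fixes v :: "'a \<Rightarrow> nat \<Rightarrow> real"
  assumes fin: "finite S" and [measurable]: "\<And>i. (\<lambda>\<omega>. v \<omega> i) \<in> borel_measurable N"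
  shows "{\<omega>\<in>space N. halve S (v \<omega>) = S'} \<in> sets N"
proof -
  have rank: "real (card {j \<in> S. v \<omega> i < v \<omega> j \<or> (v \<omega> j = v \<omega> i \<and> i < j)})
      = (\<Sum>j\<in>S. if v \<omega> i < v \<omega> j \<or> (v \<omega> j = v \<omega> i \<and> i < j) then 1 else 0)" for \<omega> i
    using sum.inter_filter[OF fin, of "\<lambda>_. 1::real"] by simp
  have "{\<omega>\<in>space N. halve S (v \<omega>) = S'} = {\<omega>\<in>space N. S' \<subseteq> S \<and> (\<forall>i\<in>S. (i \<in> S') =
      ((\<Sum>j\<in>S. if v \<omega> i < v \<omega> j \<or> (v \<omega> j = v \<omega> i \<and> i < j) then 1 else 0 :: real)
        < real ((card S + 1) div 2)))}"
    unfolding halve_def rank[symmetric] of_nat_less_iff by blast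
  also have "\<dots> \<in> sets N"
    using fin by measurable
  finally show ?thesis .
qed

lemma sets_shvv_set_eq:
  assumes "\<And>idx. fst idx < r \<Longrightarrow> (\<lambda>\<omega>. \<omega> idx) \<in> borel_measurable N"
  shows "{\<omega>\<in>space N. shvv_set K n \<omega> r = S} \<in> sets N"
  using assms
proof (induction r arbitrary: S)
  case 0
  then show ?case by (cases "{1..K} = S") auto
next
  case (Suc r)
  have [measurable]: "(\<lambda>\<omega>. \<omega> (r, i, j)) \<in> borel_measurable N" for i j
    using Suc.prems[of "(r,i,j)"] by simp
  have "{\<omega>\<in>space N. shvv_set K n \<omega> (Suc r) = S} = (\<Union>S0\<in>Pow {1..K}.
      {\<omega>\<in>space N. shvv_set K n \<omega> r = S0} \<inter>
      {\<omega>\<in>space N. halve S0 (\<lambda>i. emp_var (\<lambda>j. \<omega> (r, i, j)) (pulls K n (card S0))) = S})"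
    using shvv_set_subset[of K n _ r] by (auto simp: Let_def)
  also have "\<dots> \<in> sets N"
  proof (intro sets.finite_UN sets.Int)
    fix S0 assume "S0 \<in> Pow {1..K}"
    then have "finite S0" by (auto intro: finite_subset)
    moreover have "(\<lambda>\<omega>. emp_var (\<lambda>j. \<omega> (r, i, j)) t) \<in> borel_measurable N" for i t
      unfolding emp_var_def Let_def by measurable
    ultimately show "{\<omega>\<in>space N. halve S0 (\<lambda>i. emp_var (\<lambda>j. \<omega> (r, i, j)) (pulls K n (card S0))) = S}
        \<in> sets N"
      by (intro sets_halve_eq)
  qed (use Suc in auto)
  finally show ?case .
qed

lemma sets_shvv_set_pred:
  assumes "\<And>idx. fst idx < r \<Longrightarrow> (\<lambda>\<omega>. \<omega> idx) \<in> borel_measurable N"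
  shows "{\<omega>\<in>space N. P (shvv_set K n \<omega> r)} \<in> sets N"
proof -
  have "{\<omega>\<in>space N. P (shvv_set K n \<omega> r)}
      = (\<Union>S\<in>{S. S \<subseteq> {1..K} \<and> P S}. {\<omega>\<in>space N. shvv_set K n \<omega> r = S})"
    using shvv_set_subset[of K n _ r] by auto
  also have "\<dots> \<in> sets N"
    by (intro sets.finite_UN sets_shvv_set_eq[OF assms]) auto
  finally show ?thesis .
qed

section \<open>The sample space\<close>

locale bounded_arms =
  fixes K :: nat and D :: "nat \<Rightarrow> real measure"
  assumes K2: "K \<ge> 2"
    and prob: "\<And>i. i \<in> {1..K} \<Longrightarrow> prob_space (D i)"
    and borel: "\<And>i. i \<in> {1..K} \<Longrightarrow> sets (D i) = sets borel"
    and supp: "\<And>i. i \<in> {1..K} \<Longrightarrow> AE x in D i. x \<in> {0..1}"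
begin

lemma prob_space_arm_dist: "prob_space (arm_dist K D i)"
  using prob by (auto simp: arm_dist_def prob_space_return)

lemma sets_arm_dist: "sets (arm_dist K D i) = sets borel"
  using borel by (auto simp: arm_dist_def)

lemma space_arm_dist: "space (arm_dist K D i) = UNIV"
  using sets_eq_imp_space_eq[OF sets_arm_dist[of i]] by simp

lemma AE_arm_dist_unit: "AE x in arm_dist K D i. x \<in> {0..1}"
proof (cases "i \<in> {1..K}")
  case True
  then show ?thesis using supp[of i] unfolding arm_dist_def by simp
next
  case False
  then show ?thesis unfolding arm_dist_def by (auto simp: AE_return)
qed

lemma prob_space_sample_space: "prob_space (sample_space K D)"
  unfolding sample_space_def by (rule prob_space_PiM) (rule prob_space_arm_dist)

lemma space_sample_space: "space (sample_space K D) = UNIV"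
  unfolding sample_space_def by (auto simp: space_PiM space_arm_dist)

end

sublocale bounded_arms \<subseteq> Mp: prob_space "sample_space K D"
  by (rule prob_space_sample_space)

context bounded_arms
begin

abbreviation "M \<equiv> sample_space K D"

lemma measurable_sample_arm_dist: "(\<lambda>\<omega>. \<omega> idx) \<in> measurable M (arm_dist K D (fst (snd idx)))"
  unfolding sample_space_def by (rule measurable_component_singleton) simp

lemma measurable_sample[measurable]: "(\<lambda>\<omega>. \<omega> idx) \<in> borel_measurable M"
  using measurable_sample_arm_dist measurable_cong_sets[OF refl sets_arm_dist] by blast

lemma indep_samples: "Mp.indep_vars (\<lambda>_. borel) (\<lambda>idx \<omega>. \<omega> idx) UNIV"
proof -
  have "Mp.indep_vars (\<lambda>idx. arm_dist K D (fst (snd idx))) (\<lambda>idx \<omega>. \<omega> idx) UNIV"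
  proof (subst Mp.indep_vars_iff_distr_eq_PiM)
    have "distr M (\<Pi>\<^sub>M i\<in>UNIV. arm_dist K D (fst (snd i))) (\<lambda>x. \<lambda>i\<in>UNIV. x i) = M"
      unfolding sample_space_def
      using distr_PiM_reindex[of UNIV "\<lambda>i. arm_dist K D (fst (snd i))" id UNIV] prob_space_arm_dist
      by simp
    also have "M = (\<Pi>\<^sub>M i\<in>UNIV. distr M (arm_dist K D (fst (snd i))) (\<lambda>x. x i))"
      unfolding sample_space_def
      by (intro PiM_cong refl distr_PiM_component[symmetric]) (auto intro: prob_space_arm_dist)
    finally show "distr M (\<Pi>\<^sub>M i\<in>UNIV. arm_dist K D (fst (snd i))) (\<lambda>x. \<lambda>i\<in>UNIV. x i) =
       (\<Pi>\<^sub>M i\<in>UNIV. distr M (arm_dist K D (fst (snd i))) (\<lambda>x. x i))" .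
  qed (simp_all add: measurable_sample_arm_dist)
  then show ?thesis
    by (simp add: Mp.indep_vars_def sets_arm_dist measurable_cong_sets[OF refl sets_arm_dist])
qed

lemma AE_sample_unit: "AE \<omega> in M. \<omega> idx \<in> {0..1}"
  unfolding sample_space_def
  by (rule AE_PiM_component[OF prob_space_arm_dist]) (use AE_arm_dist_unit in auto)

lemma integral_sample:
  fixes f :: "real \<Rightarrow> real"
  assumes "f \<in> borel_measurable borel"
  shows "(\<integral>\<omega>. f (\<omega> idx) \<partial>M) = (\<integral>x. f x \<partial>arm_dist K D (fst (snd idx)))"
proof -
  have "distr M (arm_dist K D (fst (snd idx))) (\<lambda>\<omega>. \<omega> idx) = arm_dist K D (fst (snd idx))"
    unfolding sample_space_def by (rule distr_PiM_component[OF prob_space_arm_dist]) simp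
  moreover have "f \<in> borel_measurable (arm_dist K D (fst (snd idx)))"
    using assms by (simp add: measurable_cong_sets[OF sets_arm_dist refl])
  ultimately show ?thesis
    using integral_distr[OF measurable_sample_arm_dist] by metis
qed

lemma integrable_bounded_sample_fun:
  fixes f :: "real \<Rightarrow> real"
  assumes "f \<in> borel_measurable borel" and "\<And>x. x \<in> {0..1} \<Longrightarrow> \<bar>f x\<bar> \<le> B"
  shows "integrable M (\<lambda>\<omega>. f (\<omega> idx))"
  by (rule Mp.integrable_const_bound[where B=B])
     (auto intro!: eventually_mono[OF AE_sample_unit[of idx]] assms measurable_compose[OF measurable_sample])

lemma integral_sample_mult:
  assumes "idx1 \<noteq> idx2"
  shows "(\<integral>\<omega>. \<omega> idx1 * \<omega> idx2 \<partial>M) = (\<integral>\<omega>. \<omega> idx1 \<partial>M) * (\<integral>\<omega>. \<omega> idx2 \<partial>M)"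
proof -
  have "Mp.indep_vars (\<lambda>_. borel) (\<lambda>idx \<omega>. \<omega> idx) {idx1, idx2}"
    by (rule Mp.indep_vars_subset[OF indep_samples]) auto
  then have "(\<integral>\<omega>. (\<Prod>i\<in>{idx1, idx2}. \<omega> i) \<partial>M) = (\<Prod>i\<in>{idx1, idx2}. \<integral>\<omega>. \<omega> i \<partial>M)"
    by (rule Mp.indep_vars_lebesgue_integral[rotated])
       (auto intro: integrable_bounded_sample_fun[where f="\<lambda>x. x" and B=1])
  then show ?thesis using assms by simp
qed

lemma integrable_arm_power: "i \<in> {1..K} \<Longrightarrow> integrable (D i) (\<lambda>x. x ^ p)"
proof -
  assume i: "i \<in> {1..K}"
  interpret Di: prob_space "D i" using prob[OF i] .
  have "norm (x ^ p) \<le> 1" if "x \<in> {0..1}" for x :: real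
    using that by (simp add: power_le_one)
  then show ?thesis
    by (intro Di.integrable_const_bound[where B=1] eventually_mono[OF supp[OF i]])
       (auto simp: measurable_cong_sets[OF borel[OF i] refl])
qed

lemma arm_var_eq_moments:
  assumes "i \<in> {1..K}"
  shows "arm_var D i = (\<integral>x. x\<^sup>2 \<partial>D i) - (\<integral>x. x \<partial>D i)\<^sup>2"
proof -
  interpret Di: prob_space "D i" using prob[OF assms] .
  define \<mu> where "\<mu> = (\<integral>x. x \<partial>D i)"
  have "arm_var D i = (\<integral>x. x\<^sup>2 - 2 * \<mu> * x + \<mu>\<^sup>2 \<partial>D i)"
    unfolding arm_var_def \<mu>_def[symmetric] by (intro Bochner_Integration.integral_cong refl) (simp add: power2_diff)
  also have "\<dots> = (\<integral>x. x\<^sup>2 \<partial>D i) - 2 * \<mu> * \<mu> + \<mu>\<^sup>2"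
    using integrable_arm_power[OF assms, of 1] integrable_arm_power[OF assms, of 2]
    by (simp add: \<mu>_def Di.prob_space)
  finally show ?thesis by (simp add: \<mu>_def power2_eq_square)
qed

lemma arm_var_le_1:
  assumes "i \<in> {1..K}"
  shows "arm_var D i \<le> 1"
proof -
  interpret Di: prob_space "D i" using prob[OF assms] .
  have "(\<integral>x. x\<^sup>2 \<partial>D i) \<le> (\<integral>x. 1 \<partial>D i)"
    by (rule integral_mono_AE[OF integrable_arm_power[OF assms]])
       (auto intro!: eventually_mono[OF supp[OF assms]] simp: power_le_one)
  moreover have "(\<integral>x. 1 \<partial>D i) = (1::real)"
    by (simp add: Di.prob_space)
  ultimately show ?thesis
    using arm_var_eq_moments[OF assms] zero_le_power2[of "\<integral>x. x \<partial>D i"] by linarith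
qed

lemma integral_sample_diff_square:
  assumes "idx1 \<noteq> idx2" and "fst (snd idx1) = i" "fst (snd idx2) = i" and i: "i \<in> {1..K}"
  shows "(\<integral>\<omega>. (\<omega> idx1 - \<omega> idx2)\<^sup>2 \<partial>M) = 2 * arm_var D i"
proof -
  have moment: "(\<integral>\<omega>. (\<omega> idx) ^ p \<partial>M) = (\<integral>x. x ^ p \<partial>D i)" if "fst (snd idx) = i" for idx p
    using integral_sample[of "\<lambda>x. x ^ p" idx] that i by (simp add: arm_dist_def)
  have int_power: "integrable M (\<lambda>\<omega>. (\<omega> idx) ^ p)" for idx p
    by (rule integrable_bounded_sample_fun[where B=1]) (auto simp: power_le_one)
  have "AE \<omega> in M. norm (\<omega> idx1 * \<omega> idx2) \<le> (1::real)"
    using AE_sample_unit[of idx1] AE_sample_unit[of idx2]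
    by eventually_elim (auto simp: abs_mult mult_le_one)
  then have int_mult: "integrable M (\<lambda>\<omega>. \<omega> idx1 * \<omega> idx2)"
    by (rule Mp.integrable_const_bound) simp
  have "(\<integral>\<omega>. (\<omega> idx1 - \<omega> idx2)\<^sup>2 \<partial>M)
      = (\<integral>\<omega>. (\<omega> idx1)\<^sup>2 + (\<omega> idx2)\<^sup>2 - 2 * (\<omega> idx1 * \<omega> idx2) \<partial>M)"
    by (intro Bochner_Integration.integral_cong refl) (simp add: power2_diff)
  also have "\<dots> = (\<integral>\<omega>. (\<omega> idx1)\<^sup>2 \<partial>M) + (\<integral>\<omega>. (\<omega> idx2)\<^sup>2 \<partial>M) - 2 * (\<integral>\<omega>. \<omega> idx1 * \<omega> idx2 \<partial>M)"
    using int_power int_mult by simp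
  also have "\<dots> = 2 * ((\<integral>x. x\<^sup>2 \<partial>D i) - (\<integral>x. x \<partial>D i)\<^sup>2)"
    using moment[of idx1 1] moment[of idx2 1] moment[of idx1 2] moment[of idx2 2] assms
    unfolding integral_sample_mult[OF assms(1)] by (simp add: power2_eq_square)
  finally show ?thesis using arm_var_eq_moments[OF i] by simp
qed

lemma measurable_emp_var[measurable]: "(\<lambda>\<omega>. emp_var (\<lambda>a. \<omega> (r,i,a)) t) \<in> borel_measurable M"
  unfolding emp_var_def Let_def by measurable

lemma measurable_pair_gain[measurable]: "(\<lambda>\<omega>. pair_gain r j \<omega> a b) \<in> borel_measurable M"
  unfolding pair_gain_def by measurable

lemma measurable_pairing_gain[measurable]: "(\<lambda>\<omega>. pairing_gain r j k \<pi> \<omega>) \<in> borel_measurable M"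
  unfolding pairing_gain_def by measurable

lemma sets_beats_best[measurable]: "beats_best r t j \<in> sets M"
proof -
  have "beats_best r t j = {\<omega>\<in>space M. emp_var (\<lambda>a. \<omega> (r,1,a)) t \<le> emp_var (\<lambda>a. \<omega> (r,j,a)) t}"
    by (simp add: beats_best_def space_sample_space)
  also have "\<dots> \<in> sets M" by measurable
  finally show ?thesis .
qed

lemma sets_shvv_set_event: "{\<omega>. P (shvv_set K n \<omega> r)} \<in> sets M"
  using sets_shvv_set_pred[of r M P K n] by (simp add: space_sample_space)

lemma sets_loses_best: "loses_best K n r \<in> sets M"
proof -
  have "{\<omega>. 1 \<in> shvv_set K n \<omega> r} \<in> sets M" "{\<omega>. 1 \<notin> shvv_set K n \<omega> (Suc r)} \<in> sets M"
    by (rule sets_shvv_set_event)+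
  moreover have "loses_best K n r = {\<omega>. 1 \<in> shvv_set K n \<omega> r} \<inter> {\<omega>. 1 \<notin> shvv_set K n \<omega> (Suc r)}"
    unfolding loses_best_def by blast
  ultimately show ?thesis
    by (metis sets.Int)
qed

lemma indep_past_and_current_round:
  assumes B1: "B1 \<in> sets (PiM {idx. fst idx < r} (\<lambda>_. borel))"
      and B2: "B2 \<in> sets (PiM {idx. fst idx = r} (\<lambda>_. borel))"
  shows "Mp.prob {\<omega>. restrict \<omega> {idx. fst idx < r} \<in> B1 \<and> restrict \<omega> {idx. fst idx = r} \<in> B2}
       = Mp.prob {\<omega>. restrict \<omega> {idx. fst idx < r} \<in> B1} * Mp.prob {\<omega>. restrict \<omega> {idx. fst idx = r} \<in> B2}"
proof -
  define I where "I b = (if b then {idx :: nat \<times> nat \<times> nat. fst idx < r} else {idx. fst idx = r})" for b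
  define B where "B b = (if b then B1 else B2)" for b
  have "disjoint_family_on I UNIV"
    unfolding disjoint_family_on_def I_def by auto
  then have "Mp.indep_vars (\<lambda>b. PiM (I b) (\<lambda>_. borel)) (\<lambda>b \<omega>. restrict \<omega> (I b)) UNIV"
    using Mp.indep_vars_restrict[OF indep_samples] by auto
  then have "Mp.prob (\<Inter>b\<in>UNIV. (\<lambda>\<omega>. restrict \<omega> (I b)) -` B b \<inter> space M)
      = (\<Prod>b\<in>UNIV. Mp.prob ((\<lambda>\<omega>. restrict \<omega> (I b)) -` B b \<inter> space M))"
    by (rule Mp.indep_varsD_finite) (auto simp: B_def I_def B1 B2)
  then show ?thesis
    by (simp add: UNIV_bool B_def I_def Int_def Collect_conj_eq[symmetric] vimage_def
        mult.commute conj_commute space_sample_space)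
qed

lemma prob_shvv_set_event_Int_beats_best:
  "Mp.prob ({\<omega>. P (shvv_set K n \<omega> r)} \<inter> beats_best r t j)
     = Mp.prob {\<omega>. P (shvv_set K n \<omega> r)} * Mp.prob (beats_best r t j)"
proof -
  define B1 where "B1 = {f \<in> space (PiM {idx. fst idx < r} (\<lambda>_. borel)). P (shvv_set K n f r)}"
  define B2 where "B2 = {f \<in> space (PiM {idx :: nat \<times> nat \<times> nat. fst idx = r} (\<lambda>_. borel)).
    emp_var (\<lambda>a. f (r,1,a)) t \<le> emp_var (\<lambda>a. f (r,j,a)) t}"
  have "B1 \<in> sets (PiM {idx. fst idx < r} (\<lambda>_. borel))"
    unfolding B1_def by (rule sets_shvv_set_pred) (auto intro!: measurable_component_singleton)
  moreover have "B2 \<in> sets (PiM {idx. fst idx = r} (\<lambda>_. borel))"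
  proof -
    have [measurable]: "(\<lambda>f. f (r, i, a)) \<in> borel_measurable (PiM {idx. fst idx = r} (\<lambda>_. borel))" for i a
      by (rule measurable_component_singleton) simp
    show ?thesis unfolding B2_def emp_var_def Let_def by measurable
  qed
  moreover have "restrict \<omega> {idx. fst idx < r} \<in> B1 \<longleftrightarrow> P (shvv_set K n \<omega> r)" for \<omega>
    using shvv_set_cong[of r "restrict \<omega> {idx. fst idx < r}" \<omega> K n] by (simp add: B1_def space_PiM)
  moreover have "restrict \<omega> {idx. fst idx = r} \<in> B2 \<longleftrightarrow> \<omega> \<in> beats_best r t j" for \<omega>
    by (simp add: B2_def beats_best_def space_PiM)
  ultimately show ?thesis
    using indep_past_and_current_round[of B1 r B2] by (simp add: Int_def)
qed

end

section \<open>Comparing the best arm with one other arm\<close>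

context bounded_arms
begin

lemma AE_pair_gain_bounded: "AE \<omega> in M. pair_gain r j \<omega> a b \<in> {-1/2..1/2}"
proof -
  have "AE \<omega> in M. (\<omega> idx1 - \<omega> idx2)\<^sup>2 \<in> {0..1}" for idx1 idx2
    using AE_sample_unit[of idx1] AE_sample_unit[of idx2]
    by eventually_elim (auto simp: abs_square_le_1 abs_le_iff)
  note sq = this
  have half_diff: "(x - y) / 2 \<in> {-1/2..1/2}" if "x \<in> {0..1}" "y \<in> {0..1}" for x y :: real
    using that by auto
  from sq[of "(r,1,a)" "(r,1,b)"] sq[of "(r,j,a)" "(r,j,b)"] show ?thesis
    by eventually_elim (unfold pair_gain_def, rule half_diff)
qed

lemma integral_pair_gain:
  assumes "a \<noteq> b" and "j \<in> {1..K}"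
  shows "(\<integral>\<omega>. pair_gain r j \<omega> a b \<partial>M) = arm_var D 1 - arm_var D j"
proof -
  have "integrable M (\<lambda>\<omega>. (\<omega> idx1 - \<omega> idx2)\<^sup>2)" for idx1 idx2
  proof -
    have "AE \<omega> in M. norm ((\<omega> idx1 - \<omega> idx2)\<^sup>2) \<le> (1::real)"
      using AE_sample_unit[of idx1] AE_sample_unit[of idx2]
      by eventually_elim (auto simp: abs_square_le_1 abs_le_iff)
    then show ?thesis by (rule Mp.integrable_const_bound) simp
  qed
  then have "(\<integral>\<omega>. pair_gain r j \<omega> a b \<partial>M) =
     ((\<integral>\<omega>. (\<omega> (r,1,a) - \<omega> (r,1,b))\<^sup>2 \<partial>M) - (\<integral>\<omega>. (\<omega> (r,j,a) - \<omega> (r,j,b))\<^sup>2 \<partial>M)) / 2"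
    unfolding pair_gain_def by simp
  also have "\<dots> = arm_var D 1 - arm_var D j"
    using integral_sample_diff_square[of "(r,1,a)" "(r,1,b)" 1]
      integral_sample_diff_square[of "(r,j,a)" "(r,j,b)" j] assms K2
    by simp
  finally show ?thesis .
qed

lemma nn_integral_exp_pair_gain_le:
  assumes s: "s > 0" and "a \<noteq> b" and "j \<in> {1..K}"
  shows "(\<integral>\<^sup>+\<omega>. ennreal (exp (- s * pair_gain r j \<omega> a b)) \<partial>M)
          \<le> ennreal (exp (- s * (arm_var D 1 - arm_var D j) + s\<^sup>2 / 8))"
proof -
  define \<delta> where "\<delta> = arm_var D 1 - arm_var D j"
  interpret G: interval_bounded_random_variable M "\<lambda>\<omega>. - pair_gain r j \<omega> a b" "-1/2" "1/2"
    by unfold_locales (auto intro: eventually_mono[OF AE_pair_gain_bounded[of r j a b]])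
  have "(\<integral>\<omega>. - pair_gain r j \<omega> a b \<partial>M) = - \<delta>"
    using integral_pair_gain[OF assms(2,3)] by (simp add: \<delta>_def)
  then have hoeffding: "(\<integral>\<^sup>+\<omega>. ennreal (exp (s * (- pair_gain r j \<omega> a b + \<delta>))) \<partial>M)
      \<le> ennreal (exp (s\<^sup>2 / 8))"
    using G.Hoeffdings_lemma_nn_integral[OF s] by simp
  have "(\<integral>\<^sup>+\<omega>. ennreal (exp (- s * pair_gain r j \<omega> a b)) \<partial>M)
      = (\<integral>\<^sup>+\<omega>. ennreal (exp (- s * \<delta>)) * ennreal (exp (s * (- pair_gain r j \<omega> a b + \<delta>))) \<partial>M)"
    by (intro nn_integral_cong) (simp add: ennreal_mult[symmetric] mult_exp_exp algebra_simps)
  also have "\<dots> = ennreal (exp (- s * \<delta>)) * (\<integral>\<^sup>+\<omega>. ennreal (exp (s * (- pair_gain r j \<omega> a b + \<delta>))) \<partial>M)"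
    by (rule nn_integral_cmult) measurable
  also have "\<dots> \<le> ennreal (exp (- s * \<delta>)) * ennreal (exp (s\<^sup>2 / 8))"
    by (rule mult_left_mono[OF hoeffding]) simp
  also have "\<dots> = ennreal (exp (- s * \<delta> + s\<^sup>2 / 8))"
    by (simp add: ennreal_mult[symmetric] mult_exp_exp)
  finally show ?thesis by (simp add: \<delta>_def)
qed

lemma indep_vars_pair_gains:
  assumes \<pi>: "\<pi> permutes {..<t}"
  shows "Mp.indep_vars (\<lambda>_. borel) (\<lambda>i \<omega>. pair_gain r j \<omega> (\<pi> (2*i)) (\<pi> (2*i+1))) {..<k}"
proof -
  define S where "S i = {(r,1,\<pi> (2*i)), (r,1,\<pi> (2*i+1)), (r,j,\<pi> (2*i)), (r,j,\<pi> (2*i+1))}" for i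
  define Y where
    "Y i f = ((f (r,1,\<pi> (2*i)) - f (r,1,\<pi> (2*i+1)))\<^sup>2 - (f (r,j,\<pi> (2*i)) - f (r,j,\<pi> (2*i+1)))\<^sup>2) / 2"
    for i and f :: "nat \<times> nat \<times> nat \<Rightarrow> real"
  have inj_iff: "\<pi> x = \<pi> y \<longleftrightarrow> x = y" for x y
    using permutes_inj[OF \<pi>] by (simp add: inj_eq)
  have "disjoint_family_on S {..<k}"
    unfolding disjoint_family_on_def S_def by (auto simp: inj_iff; presburger)
  then have blocks: "Mp.indep_vars (\<lambda>i. PiM (S i) (\<lambda>_. borel)) (\<lambda>i \<omega>. restrict \<omega> (S i)) {..<k}"
    using Mp.indep_vars_restrict[OF indep_samples] by auto
  have "Y i \<in> borel_measurable (PiM (S i) (\<lambda>_. borel))" for i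
  proof -
    have [measurable]: "(\<lambda>f. f x) \<in> borel_measurable (PiM (S i) (\<lambda>_. borel))" if "x \<in> S i" for x
      using measurable_component_singleton[OF that] .
    show ?thesis unfolding Y_def by (measurable; simp add: S_def)
  qed
  with blocks have "Mp.indep_vars (\<lambda>_. borel) (\<lambda>i \<omega>. Y i (restrict \<omega> (S i))) {..<k}"
    by (rule Mp.indep_vars_compose2)
  moreover have "Y i (restrict \<omega> (S i)) = pair_gain r j \<omega> (\<pi> (2*i)) (\<pi> (2*i+1))" for i \<omega>
    by (simp add: Y_def S_def pair_gain_def)
  ultimately show ?thesis by simp
qed

lemma nn_integral_exp_pairing_gain_le:
  assumes s: "s > 0" and \<pi>: "\<pi> permutes {..<t}" and j: "j \<in> {1..K}"
  shows "(\<integral>\<^sup>+\<omega>. ennreal (exp (- s * pairing_gain r j k \<pi> \<omega>)) \<partial>M)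
           \<le> ennreal (exp (real k * (- s * (arm_var D 1 - arm_var D j) + s\<^sup>2 / 8)))"
proof -
  define c where "c = - s * (arm_var D 1 - arm_var D j) + s\<^sup>2 / 8"
  have "(\<integral>\<^sup>+\<omega>. ennreal (exp (- s * pairing_gain r j k \<pi> \<omega>)) \<partial>M)
      = (\<integral>\<^sup>+\<omega>. (\<Prod>i<k. ennreal (exp (- s * pair_gain r j \<omega> (\<pi> (2*i)) (\<pi> (2*i+1))))) \<partial>M)"
    by (intro nn_integral_cong) (simp add: pairing_gain_def sum_distrib_left exp_sum prod_ennreal)
  also have "\<dots> = (\<Prod>i<k. \<integral>\<^sup>+\<omega>. ennreal (exp (- s * pair_gain r j \<omega> (\<pi> (2*i)) (\<pi> (2*i+1)))) \<partial>M)"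
    by (intro Mp.indep_vars_nn_integral Mp.indep_vars_compose2[OF indep_vars_pair_gains[OF \<pi>]])
       auto
  also have "\<dots> \<le> (\<Prod>i<k. ennreal (exp c))"
  proof (rule prod_mono_ennreal)
    fix i
    have "\<pi> (2*i) \<noteq> \<pi> (2*i+1)"
      using permutes_inj[OF \<pi>] by (simp add: inj_eq)
    then show "(\<integral>\<^sup>+\<omega>. ennreal (exp (- s * pair_gain r j \<omega> (\<pi> (2*i)) (\<pi> (2*i+1)))) \<partial>M) \<le> ennreal (exp c)"
      unfolding c_def by (rule nn_integral_exp_pair_gain_le[OF s _ j])
  qed
  also have "\<dots> = ennreal (exp (real k * c))"
    by (simp add: ennreal_power exp_of_nat_mult)
  finally show ?thesis unfolding c_def .
qed

lemma nn_integral_exp_emp_var_diff_le: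
  assumes s: "s > 0" and t: "t \<ge> 2" and j: "j \<in> {1..K}"
  defines "k \<equiv> t div 2"
  shows "(\<integral>\<^sup>+\<omega>. ennreal (exp (- s * (real k * (emp_var (\<lambda>a. \<omega> (r,1,a)) t - emp_var (\<lambda>a. \<omega> (r,j,a)) t)))) \<partial>M)
         \<le> ennreal (exp (real k * (- s * (arm_var D 1 - arm_var D j) + s\<^sup>2 / 8)))"
proof -
  define P where "P = {\<pi>. \<pi> permutes ({..<t}::nat set)}"
  define w where "w = (1 / fact t :: real)"
  define c where "c = real k * (- s * (arm_var D 1 - arm_var D j) + s\<^sup>2 / 8)"
  have "(\<integral>\<^sup>+\<omega>. ennreal (exp (- s * (real k * (emp_var (\<lambda>a. \<omega> (r,1,a)) t - emp_var (\<lambda>a. \<omega> (r,j,a)) t)))) \<partial>M)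
      \<le> (\<integral>\<^sup>+\<omega>. (\<Sum>\<pi>\<in>P. ennreal w * ennreal (exp (- s * pairing_gain r j k \<pi> \<omega>))) \<partial>M)"
  proof (intro nn_integral_mono)
    fix \<omega>
    have "ennreal (exp (- s * (real k * (emp_var (\<lambda>a. \<omega> (r,1,a)) t - emp_var (\<lambda>a. \<omega> (r,j,a)) t))))
        \<le> ennreal (\<Sum>\<pi>\<in>P. w * exp (- s * pairing_gain r j k \<pi> \<omega>))"
      unfolding P_def w_def k_def by (intro ennreal_leI exp_emp_var_diff_le_average t)
    also have "\<dots> = (\<Sum>\<pi>\<in>P. ennreal (w * exp (- s * pairing_gain r j k \<pi> \<omega>)))"
      by (intro sum_ennreal[symmetric]) (simp add: w_def)
    also have "\<dots> = (\<Sum>\<pi>\<in>P. ennreal w * ennreal (exp (- s * pairing_gain r j k \<pi> \<omega>)))"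
      by (intro sum.cong refl ennreal_mult) (auto simp: w_def)
    finally show "ennreal (exp (- s * (real k * (emp_var (\<lambda>a. \<omega> (r,1,a)) t - emp_var (\<lambda>a. \<omega> (r,j,a)) t))))
        \<le> (\<Sum>\<pi>\<in>P. ennreal w * ennreal (exp (- s * pairing_gain r j k \<pi> \<omega>)))" .
  qed
  also have "\<dots> = (\<Sum>\<pi>\<in>P. ennreal w * (\<integral>\<^sup>+\<omega>. ennreal (exp (- s * pairing_gain r j k \<pi> \<omega>)) \<partial>M))"
    by (subst nn_integral_sum) (auto intro!: sum.cong nn_integral_cmult)
  also have "\<dots> \<le> (\<Sum>\<pi>\<in>P. ennreal w * ennreal (exp c))"
    unfolding P_def c_def
    by (intro sum_mono mult_left_mono nn_integral_exp_pairing_gain_le[OF s _ j]) auto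
  also have "\<dots> = ennreal (exp c)"
    using card_permutations[of "{..<t}" t]
    by (simp add: P_def w_def ennreal_of_nat_eq_real_of_nat mult.assoc[symmetric] flip: ennreal_mult)
  finally show ?thesis unfolding c_def .
qed

lemma prob_beats_best_le:
  assumes j: "j \<in> {1..K}" and gap: "arm_var D j \<le> arm_var D 1"
  shows "Mp.prob (beats_best r t j) \<le> exp (- 2 * real (t div 2) * (arm_var D 1 - arm_var D j)\<^sup>2)"
proof (cases "t \<ge> 2 \<and> arm_var D j < arm_var D 1")
  case False
  then have "real (t div 2) = 0 \<or> arm_var D 1 - arm_var D j = 0" using gap by auto
  then show ?thesis using Mp.prob_le_1 by auto
next
  case True
  define k where "k = t div 2"
  define \<delta> where "\<delta> = arm_var D 1 - arm_var D j"
  define Dv where "Dv \<omega> = real k * (emp_var (\<lambda>a. \<omega> (r,1,a)) t - emp_var (\<lambda>a. \<omega> (r,j,a)) t)" for \<omega>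
  have "k > 0" "\<delta> > 0" using True by (auto simp: k_def \<delta>_def)
  \<comment> \<open>Chernoff bound with s = 4 \<delta>, the minimiser of - s \<delta> + s^2 / 8\<close>
  have "emeasure M {\<omega> \<in> space M. Dv \<omega> \<le> 0}
      \<le> ennreal (exp (4 * \<delta> * 0)) * (\<integral>\<^sup>+\<omega>. ennreal (exp (- (4 * \<delta>) * Dv \<omega>)) * indicator (space M) \<omega> \<partial>M)"
    using \<open>\<delta> > 0\<close> by (intro Chernoff_ineq_nn_integral_le) (auto simp: Dv_def)
  also have "\<dots> \<le> ennreal (exp (real k * (- (4 * \<delta>) * \<delta> + (4 * \<delta>)\<^sup>2 / 8)))"
    using nn_integral_exp_emp_var_diff_le[of "4 * \<delta>" t j r] True j \<open>\<delta> > 0\<close>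
    by (simp add: Dv_def k_def \<delta>_def space_sample_space)
  also have "real k * (- (4 * \<delta>) * \<delta> + (4 * \<delta>)\<^sup>2 / 8) = - 2 * real k * \<delta>\<^sup>2"
    by (simp add: power2_eq_square algebra_simps)
  finally have "Mp.prob {\<omega> \<in> space M. Dv \<omega> \<le> 0} \<le> exp (- 2 * real k * \<delta>\<^sup>2)"
    by (simp add: Mp.emeasure_eq_measure)
  moreover have "beats_best r t j = {\<omega> \<in> space M. Dv \<omega> \<le> 0}"
    using \<open>k > 0\<close> by (auto simp: beats_best_def Dv_def mult_le_0_iff space_sample_space)
  ultimately show ?thesis
    by (simp add: k_def \<delta>_def)
qed

end

section \<open>Losing the best arm in one round\<close>

lemma card_filter_eq_sum_indicator:
  "finite J \<Longrightarrow> real (card {j\<in>J. \<omega> \<in> E j}) = (\<Sum>j\<in>J. indicator (E j) \<omega>)"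
  using sum.inter_filter[of J "\<lambda>_. 1::real" "\<lambda>j. \<omega> \<in> E j"] by (simp add: indicator_def of_bool_def)

lemma (in prob_space) integrable_card_events:
  assumes "finite J" and "\<And>j. j \<in> J \<Longrightarrow> E j \<in> events"
  shows "integrable M (\<lambda>\<omega>. real (card {j\<in>J. \<omega> \<in> E j}))"
  unfolding card_filter_eq_sum_indicator[OF assms(1)]
  using assms(2) by (intro Bochner_Integration.integrable_sum) (auto simp: emeasure_eq_measure)

lemma (in prob_space) sum_prob_eq_expectation_card:
  assumes "finite J" and "\<And>j. j \<in> J \<Longrightarrow> E j \<in> events"
  shows "(\<Sum>j\<in>J. prob (E j)) = expectation (\<lambda>\<omega>. real (card {j\<in>J. \<omega> \<in> E j}))"
proof -
  have "expectation (\<lambda>\<omega>. \<Sum>j\<in>J. indicator (E j) \<omega> :: real) = (\<Sum>j\<in>J. expectation (indicator (E j)))"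
    by (rule Bochner_Integration.integral_sum) (use assms in \<open>auto simp: emeasure_eq_measure\<close>)
  then show ?thesis
    using assms by (simp add: card_filter_eq_sum_indicator)
qed

lemma (in prob_space) prob_le_sum_prob_div:
  assumes "finite J" and E: "\<And>j. j \<in> J \<Longrightarrow> E j \<in> events" and "A \<in> events" "c > 0"
    and A: "\<And>\<omega>. \<omega> \<in> A \<Longrightarrow> c \<le> real (card {j\<in>J. \<omega> \<in> E j})"
  shows "prob A \<le> (\<Sum>j\<in>J. prob (E j)) / c"
proof -
  define N where "N \<omega> = real (card {j\<in>J. \<omega> \<in> E j})" for \<omega>
  have [measurable]: "N \<in> borel_measurable M"
    using integrable_card_events[OF assms(1) E] unfolding N_def by (rule borel_measurable_integrable)
  have "prob A \<le> prob {\<omega>\<in>space M. c \<le> N \<omega>}"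
  proof (rule finite_measure_mono)
    show "A \<subseteq> {\<omega>\<in>space M. c \<le> N \<omega>}"
      using A sets.sets_into_space[OF \<open>A \<in> events\<close>] by (auto simp: N_def)
  qed measurable
  also have "\<dots> \<le> expectation N / c"
    using integrable_card_events[OF assms(1) E] \<open>c > 0\<close> unfolding N_def
    by (intro integral_Markov_inequality_measure[where A="space M"]) auto
  also have "expectation N = (\<Sum>j\<in>J. prob (E j))"
    unfolding N_def using sum_prob_eq_expectation_card[OF assms(1) E] by simp
  finally show ?thesis .
qed

context bounded_arms
begin

lemma sum_prob_weak_arms_le:
  "(\<Sum>j\<in>{2..K}. Mp.prob {\<omega>. j \<in> weak_arms (shvv_set K n \<omega> r) q}) \<le> real (active_count K r - 1 - q)"
proof -
  have "(\<Sum>j\<in>{2..K}. Mp.prob {\<omega>. j \<in> weak_arms (shvv_set K n \<omega> r) q})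
      = Mp.expectation (\<lambda>\<omega>. real (card {j\<in>{2..K}. \<omega> \<in> {\<omega>. j \<in> weak_arms (shvv_set K n \<omega> r) q}}))"
    by (intro Mp.sum_prob_eq_expectation_card sets_shvv_set_event) simp
  also have "\<dots> \<le> Mp.expectation (\<lambda>_. real (active_count K r - 1 - q))"
  proof (intro integral_mono)
    show "integrable M (\<lambda>\<omega>. real (card {j\<in>{2..K}. \<omega> \<in> {\<omega>. j \<in> weak_arms (shvv_set K n \<omega> r) q}}))"
      by (intro Mp.integrable_card_events sets_shvv_set_event) simp
  next
    fix \<omega>
    have "{j\<in>{2..K}. \<omega> \<in> {\<omega>. j \<in> weak_arms (shvv_set K n \<omega> r) q}} = weak_arms (shvv_set K n \<omega> r) q"
      using weak_arms_shvv_set_subset[of K n \<omega> r q] by auto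
    moreover have "card (weak_arms (shvv_set K n \<omega> r) q) \<le> active_count K r - 1 - q"
      using card_weak_arms_le[of "shvv_set K n \<omega> r" q] shvv_set_subset[of K n \<omega> r]
      by (simp add: card_shvv_set finite_subset)
    ultimately show "real (card {j\<in>{2..K}. \<omega> \<in> {\<omega>. j \<in> weak_arms (shvv_set K n \<omega> r) q}})
        \<le> real (active_count K r - 1 - q)" by simp
  qed simp
  finally show ?thesis by (simp add: Mp.prob_space)
qed

text \<open>If arm 1 is eliminated, at least (m + 1) div 2 - q weak arms beat it; this is Markov's
  inequality for their number.\<close>
lemma prob_loses_best_le_sum:
  fixes r n :: nat
  defines "m \<equiv> active_count K r"
  defines "q \<equiv> m div 4"
  shows "Mp.prob (loses_best K n r) \<le> (\<Sum>j\<in>{2..K}.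
    Mp.prob ({\<omega>. j \<in> weak_arms (shvv_set K n \<omega> r) q} \<inter> beats_best r (pulls K n m) j))
    / real ((m + 1) div 2 - q)"
proof (rule Mp.prob_le_sum_prob_div)
  define t where "t = pulls K n m"
  fix \<omega> assume "\<omega> \<in> loses_best K n r"
  then have "1 \<in> shvv_set K n \<omega> r"
    and "1 \<notin> halve (shvv_set K n \<omega> r) (\<lambda>i. emp_var (\<lambda>a. \<omega> (r, i, a)) t)"
    by (auto simp: loses_best_def t_def m_def card_shvv_set Let_def)
  then have "(m + 1) div 2 \<le> card {j \<in> weak_arms (shvv_set K n \<omega> r) q.
      emp_var (\<lambda>a. \<omega> (r, 1, a)) t \<le> emp_var (\<lambda>a. \<omega> (r, j, a)) t} + q"
    unfolding m_def card_shvv_set[of K n \<omega> r, symmetric]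
    using shvv_set_subset[of K n \<omega> r] finite_subset
    by (intro card_weak_arms_beating_ge) auto
  also have "{j \<in> weak_arms (shvv_set K n \<omega> r) q.
      emp_var (\<lambda>a. \<omega> (r, 1, a)) t \<le> emp_var (\<lambda>a. \<omega> (r, j, a)) t}
      = {j\<in>{2..K}. \<omega> \<in> {\<omega>. j \<in> weak_arms (shvv_set K n \<omega> r) q} \<inter> beats_best r t j}"
    using weak_arms_shvv_set_subset[of K n \<omega> r q] by (auto simp: beats_best_def)
  finally show "real ((m + 1) div 2 - q)
      \<le> real (card {j\<in>{2..K}. \<omega> \<in> {\<omega>. j \<in> weak_arms (shvv_set K n \<omega> r) q} \<inter> beats_best r t j})"
    by simp
next
  have "m \<ge> 1" using active_count_pos[of K r] K2 by (simp add: m_def)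
  then show "0 < real ((m + 1) div 2 - q)"
    unfolding q_def by simp
qed (auto intro: sets_loses_best sets_shvv_set_event sets_beats_best)

lemma sum_prob_weak_Int_beats_best_le:
  fixes r n :: nat and \<epsilon> :: real
  defines "m \<equiv> active_count K r"
  defines "q \<equiv> m div 4"
  assumes beats: "\<And>j. j \<in> {q+2..K} \<Longrightarrow> Mp.prob (beats_best r (pulls K n m) j) \<le> \<epsilon>"
    and "\<epsilon> \<ge> 0"
  shows "(\<Sum>j\<in>{2..K}. Mp.prob ({\<omega>. j \<in> weak_arms (shvv_set K n \<omega> r) q} \<inter> beats_best r (pulls K n m) j))
    \<le> real (m - 1 - q) * \<epsilon>"
proof -
  define weak where "weak j = {\<omega>. j \<in> weak_arms (shvv_set K n \<omega> r) q}" for j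
  have "Mp.prob (weak j \<inter> beats_best r (pulls K n m) j) \<le> Mp.prob (weak j) * \<epsilon>" for j
  proof (cases "q + 2 \<le> j \<and> j \<le> K")
    case True
    have "Mp.prob (weak j \<inter> beats_best r (pulls K n m) j)
        = Mp.prob (weak j) * Mp.prob (beats_best r (pulls K n m) j)"
      unfolding weak_def by (rule prob_shvv_set_event_Int_beats_best)
    also have "\<dots> \<le> Mp.prob (weak j) * \<epsilon>"
      using beats[of j] True by (simp add: mult_left_mono)
    finally show ?thesis .
  next
    case False
    have "j \<notin> weak_arms (shvv_set K n \<omega> r) q" for \<omega>
    proof -
      have "0 \<notin> shvv_set K n \<omega> r"
        using shvv_set_subset[of K n \<omega> r] by fastforce
      then show ?thesis
        using weak_arms_index_ge[of "shvv_set K n \<omega> r" j q] weak_arms_shvv_set_subset[of K n \<omega> r q] False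
        by auto
    qed
    then show ?thesis by (simp add: weak_def)
  qed
  then have "(\<Sum>j\<in>{2..K}. Mp.prob (weak j \<inter> beats_best r (pulls K n m) j))
      \<le> (\<Sum>j\<in>{2..K}. Mp.prob (weak j)) * \<epsilon>"
    by (simp add: sum_distrib_right sum_mono)
  also have "\<dots> \<le> real (m - 1 - q) * \<epsilon>"
    using sum_prob_weak_arms_le[of n r q] \<open>\<epsilon> \<ge> 0\<close> by (simp add: weak_def m_def mult_right_mono)
  finally show ?thesis unfolding weak_def .
qed

lemma prob_loses_best_le:
  fixes r n :: nat and \<epsilon> :: real
  defines "m \<equiv> active_count K r"
  assumes "\<And>j. j \<in> {m div 4 + 2..K} \<Longrightarrow> Mp.prob (beats_best r (pulls K n m) j) \<le> \<epsilon>"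
    and "\<epsilon> \<ge> 0"
  shows "Mp.prob (loses_best K n r) \<le> 3 * \<epsilon>"
proof -
  define c where "c = (m + 1) div 2 - m div 4"
  have "m \<ge> 1" using active_count_pos[of K r] K2 by (simp add: m_def)
  then have "c > 0" and c3: "m - 1 - m div 4 \<le> 3 * c"
    unfolding c_def by linarith+
  define S where "S = (\<Sum>j\<in>{2..K}.
    Mp.prob ({\<omega>. j \<in> weak_arms (shvv_set K n \<omega> r) (m div 4)} \<inter> beats_best r (pulls K n m) j))"
  have "Mp.prob (loses_best K n r) \<le> S / real c"
    unfolding S_def c_def m_def by (rule prob_loses_best_le_sum)
  also have "\<dots> \<le> real (m - 1 - m div 4) * \<epsilon> / real c"
    unfolding S_def m_def
    by (intro divide_right_mono sum_prob_weak_Int_beats_best_le) (use assms in \<open>simp_all add: m_def\<close>)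
  also have "\<dots> \<le> real (3 * c) * \<epsilon> / real c"
    using c3 \<open>\<epsilon> \<ge> 0\<close> by (intro divide_right_mono mult_right_mono) simp_all
  also have "\<dots> = 3 * \<epsilon>"
    using \<open>c > 0\<close> by simp
  finally show ?thesis .
qed

end

section \<open>The error bound\<close>

lemma pulls_exponent_ge:
  fixes H :: real
  assumes m: "1 \<le> m" "m \<le> K" and K2: "K \<ge> 2" and budget: "real K * log 2 (real K) \<le> real n"
    and H: "H > 0"
  shows "(real n - 2 * (real K * log 2 (real K))) / (4 * (log 2 (real K) * H))
    \<le> (real (pulls K n m) - 1) * real (m div 4 + 2) / H"
proof -
  define L where "L = log 2 (real K)"
  define x where "x = real n / (real m * L)"
  have L: "L \<ge> 1" unfolding L_def using K2 by simp
  have mL: "real m * L > 0" using m L by simp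
  have "real m * L \<le> real K * L"
    using m L by (intro mult_right_mono) auto
  then have "real m * L \<le> real n"
    using budget unfolding L_def by linarith
  then have x1: "x \<ge> 1" unfolding x_def using mL by (simp add: field_simps)
  have "real (pulls K n m) = of_int \<lfloor>x\<rfloor>"
    unfolding pulls_def x_def L_def using x1 x_def L_def by simp
  then have t1: "real (pulls K n m) \<ge> 1" and tx: "real (pulls K n m) > x - 1"
    using x1 floor_correct[of x] by simp_all
  have "(real (pulls K n m) - 1) * real (m div 4 + 2) \<ge> (real (pulls K n m) - 1) * (real m / 4)"
    using t1 by (intro mult_left_mono) linarith+
  moreover have "(real (pulls K n m) - 1) * (real m / 4) \<ge> (x - 2) * (real m / 4)"
    using tx by (intro mult_right_mono) auto
  moreover have "(x - 2) * (real m / 4) = real n / (4 * L) - real m / 2"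
    unfolding x_def using mL L m by (simp add: field_simps)
  moreover have "real n / (4 * L) - real m / 2 \<ge> (real n - 2 * (real K * L)) / (4 * L)"
    using m L by (simp add: field_simps)
  ultimately have "(real n - 2 * (real K * L)) / (4 * L) \<le> (real (pulls K n m) - 1) * real (m div 4 + 2)"
    by linarith
  then have "(real n - 2 * (real K * L)) / (4 * L) / H \<le> (real (pulls K n m) - 1) * real (m div 4 + 2) / H"
    using H by (intro divide_right_mono) auto
  then show ?thesis
    unfolding L_def[symmetric] by (simp add: mult.assoc)
qed

text \<open>With z = n / (8 Y) and exp z > 3 one gets z > 1, hence n \<ge> 8 a, so the difference of
  the two exponents is at least 47/64 z; and exp (47/64 z) > 2 because 2^64 < 3^47.\<close>
lemma exp_exponent_diff_ge_2:
  fixes n a Y :: real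
  assumes a: "a > 0" and na: "a \<le> n" and Ya: "a \<le> Y" and exp_z: "exp (n / (8 * Y)) > 3"
  shows "exp ((n - 2 * a) / (4 * Y) - (n - a)\<^sup>2 / (8 * n * Y)) \<ge> 2"
proof -
  have npos: "n > 0" and Ypos: "Y > 0" using a na Ya by auto
  define z where "z = n / (8 * Y)"
  have "z > 1"
  proof (rule ccontr)
    assume "\<not> z > 1"
    then have "exp z \<le> exp 1" by simp
    then show False using exp_le exp_z unfolding z_def by linarith
  qed
  then have n8a: "8 * a \<le> n" using Ya Ypos unfolding z_def by (simp add: field_simps)
  have "a * n \<le> n * n / 8" using n8a npos by (simp add: field_simps mult_right_mono)
  moreover have "a * a \<le> (n / 8) * (n / 8)" using n8a a by (intro mult_mono) auto
  ultimately have quad: "n\<^sup>2 - 2 * a * n - a\<^sup>2 \<ge> 47 / 64 * n\<^sup>2" by (simp add: power2_eq_square field_simps)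
  have "47 / 64 * z = (47 / 64 * n\<^sup>2) / (8 * n * Y)"
    unfolding z_def using npos by (simp add: power2_eq_square field_simps)
  also have "\<dots> \<le> (n\<^sup>2 - 2 * a * n - a\<^sup>2) / (8 * n * Y)"
    using quad npos Ypos by (intro divide_right_mono) auto
  also have "\<dots> = (n - 2 * a) / (4 * Y) - (n - a)\<^sup>2 / (8 * n * Y)"
    using npos Ypos by (simp add: field_simps power2_eq_square)
  finally have gap: "(n - 2 * a) / (4 * Y) - (n - a)\<^sup>2 / (8 * n * Y) \<ge> 47 / 64 * z" .
  have "(2::real) ^ 64 < 3 ^ 47" by simp
  also have "(3::real) ^ 47 < exp z ^ 47" using exp_z by (intro power_strict_mono) (auto simp: z_def)
  also have "exp z ^ 47 = exp (47 / 64 * z) ^ 64"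
    by (simp add: exp_of_nat_mult[symmetric])
  finally have "exp (47 / 64 * z) > 2" by (rule power_less_imp_less_base) simp
  then show ?thesis using gap by (meson exp_le_cancel_iff less_le_trans less_imp_le)
qed

text \<open>The bound is trivial unless its right-hand side is below 1, and then the factor
  R / L \<le> (L + 1) / L \<le> 2 is absorbed by the gap between the exponents.\<close>
lemma exp_linear_le_exp_quadratic:
  fixes n a Y L R :: real
  assumes a: "a > 0" and na: "a \<le> n" and Ya: "a \<le> Y" and L1: "L \<ge> 1" and RL: "R \<le> L + 1"
    and R0: "R \<ge> 0" and B: "3 * L * exp (- (n - a)\<^sup>2 / (8 * n * Y)) < 1"
  shows "3 * R * exp (- (n - 2 * a) / (4 * Y)) \<le> 3 * L * exp (- (n - a)\<^sup>2 / (8 * n * Y))"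
proof -
  have npos: "n > 0" and Ypos: "Y > 0" using a na Ya by auto
  define E where "E = (n - a)\<^sup>2 / (8 * n * Y)"
  define X where "X = (n - 2 * a) / (4 * Y)"
  have "(n - a)\<^sup>2 \<le> n\<^sup>2" using na a by (intro power_mono) auto
  then have "E \<le> n / (8 * Y)" unfolding E_def using npos Ypos
    by (simp add: divide_right_mono power2_eq_square field_simps)
  moreover have "exp (- E) < 1 / (3 * L)" using B L1 by (simp add: E_def field_simps)
  then have "exp E > 3" using L1 by (simp add: exp_minus field_simps)
  ultimately have "exp (n / (8 * Y)) > 3" by (meson exp_le_cancel_iff less_le_trans)
  then have exp2: "exp (X - E) \<ge> 2"
    unfolding X_def E_def by (rule exp_exponent_diff_ge_2[OF a na Ya])
  have "3 * R * exp (- X) = 3 * R * exp (- E) / exp (X - E)"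
    by (simp add: exp_diff exp_minus field_simps)
  also have "\<dots> \<le> 3 * R * exp (- E) / 2"
    using exp2 R0 by (intro divide_left_mono) auto
  also have "\<dots> \<le> 3 * L * exp (- E)"
    using RL L1 by (simp add: field_simps)
  finally show ?thesis unfolding X_def E_def minus_divide_left .
qed

definition var_hardness :: "(nat \<Rightarrow> real measure) \<Rightarrow> nat \<Rightarrow> real" where
  "var_hardness D K = Max ((\<lambda>i. real i / (arm_var D 1 - arm_var D i)\<^sup>2) ` {2..K})"

locale sorted_arms = bounded_arms +
  assumes best: "arm_var D 1 > arm_var D 2"
    and sorted: "\<And>i. i \<in> {2..<K} \<Longrightarrow> arm_var D (Suc i) \<le> arm_var D i"
begin

lemma arm_var_le_second: "j \<in> {2..K} \<Longrightarrow> arm_var D j \<le> arm_var D 2"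
proof (induction j)
  case (Suc j)
  show ?case
  proof (cases "Suc j = 2")
    case False
    then have "j \<in> {2..<K}" "j \<in> {2..K}" using Suc.prems by auto
    then show ?thesis using sorted Suc.IH by (meson order_trans)
  qed (simp add: numeral_2_eq_2)
qed simp

lemma gap_pos: "j \<in> {2..K} \<Longrightarrow> arm_var D j < arm_var D 1"
  using arm_var_le_second best by (meson le_less_trans)

lemma ratio_le_var_hardness:
  "i \<in> {2..K} \<Longrightarrow> real i / (arm_var D 1 - arm_var D i)\<^sup>2 \<le> var_hardness D K"
  unfolding var_hardness_def by (intro Max_ge) auto

lemma card_le_var_hardness: "real K \<le> var_hardness D K"
proof -
  have "K \<in> {2..K}" using K2 by simp
  have "arm_var D K \<ge> 0"
    unfolding arm_var_def by simp
  then have "(arm_var D 1 - arm_var D K)\<^sup>2 \<le> 1"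
    using arm_var_le_1[of 1] gap_pos[OF \<open>K \<in> {2..K}\<close>] K2 by (simp add: power_le_one)
  moreover have "(arm_var D 1 - arm_var D K)\<^sup>2 > 0"
    using gap_pos[OF \<open>K \<in> {2..K}\<close>] by simp
  ultimately have "real K \<le> real K / (arm_var D 1 - arm_var D K)\<^sup>2"
    by (simp add: le_divide_eq mult_left_le)
  also have "\<dots> \<le> var_hardness D K"
    using ratio_le_var_hardness[OF \<open>K \<in> {2..K}\<close>] .
  finally show ?thesis .
qed

lemma index_div_var_hardness_le_gap:
  assumes "j \<in> {2..K}"
  shows "real j / var_hardness D K \<le> (arm_var D 1 - arm_var D j)\<^sup>2"
proof -
  have "var_hardness D K > 0"
    using card_le_var_hardness K2 by linarith
  moreover have "(arm_var D 1 - arm_var D j)\<^sup>2 > 0"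
    using gap_pos[OF assms] by simp
  ultimately show ?thesis
    using ratio_le_var_hardness[OF assms] by (simp add: field_simps)
qed

lemma prob_loses_best_exp_le:
  assumes budget: "real K * log 2 (real K) \<le> real n"
  shows "Mp.prob (loses_best K n r) \<le> 3 * exp (- ((real n - 2 * (real K * log 2 (real K)))
    / (4 * (log 2 (real K) * var_hardness D K))))"
proof -
  define m where "m = active_count K r"
  define t where "t = pulls K n m"
  define H where "H = var_hardness D K"
  define \<epsilon> where "\<epsilon> = exp (- ((real t - 1) * real (m div 4 + 2) / H))"
  have H: "H > 0" using card_le_var_hardness K2 by (simp add: H_def)
  have m: "1 \<le> m" "m \<le> K"
    using active_count_pos[of K r] active_count_le[of K r] K2 by (simp_all add: m_def)
  have "Mp.prob (beats_best r t j) \<le> \<epsilon>" if j: "j \<in> {m div 4 + 2..K}" for j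
  proof -
    have j2: "j \<in> {2..K}" and j1: "j \<in> {1..K}" using j by auto
    have "real (m div 4 + 2) / H \<le> real j / H"
      using j H by (intro divide_right_mono) auto
    also have "\<dots> \<le> (arm_var D 1 - arm_var D j)\<^sup>2"
      unfolding H_def by (rule index_div_var_hardness_le_gap[OF j2])
    finally have "(real t - 1) * (real (m div 4 + 2) / H) \<le> real (2 * (t div 2)) * (arm_var D 1 - arm_var D j)\<^sup>2"
      using H by (intro mult_mono) auto
    then have "exp (- 2 * real (t div 2) * (arm_var D 1 - arm_var D j)\<^sup>2) \<le> \<epsilon>"
      unfolding \<epsilon>_def by simp
    moreover have "Mp.prob (beats_best r t j) \<le> exp (- 2 * real (t div 2) * (arm_var D 1 - arm_var D j)\<^sup>2)"
      using gap_pos[OF j2] by (intro prob_beats_best_le[OF j1]) simp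
    ultimately show ?thesis by linarith
  qed
  then have "Mp.prob (loses_best K n r) \<le> 3 * \<epsilon>"
    unfolding t_def m_def by (intro prob_loses_best_le) (auto simp: \<epsilon>_def)
  also have "\<epsilon> \<le> exp (- ((real n - 2 * (real K * log 2 (real K))) / (4 * (log 2 (real K) * H))))"
    unfolding \<epsilon>_def t_def using pulls_exponent_ge[OF m K2 budget H] by simp
  finally show ?thesis
    unfolding H_def by simp
qed

lemma prob_shvv_out_ne_best_le_rounds:
  assumes budget: "real K * log 2 (real K) \<le> real n"
  shows "measure M {\<omega> \<in> space M. shvv_out K n \<omega> \<noteq> 1}
    \<le> 3 * real (nat \<lceil>log 2 (real K)\<rceil>) * exp (- ((real n - 2 * (real K * log 2 (real K)))
      / (4 * (log 2 (real K) * var_hardness D K))))"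
proof -
  define R where "R = nat \<lceil>log 2 (real K)\<rceil>"
  have "measure M {\<omega> \<in> space M. shvv_out K n \<omega> \<noteq> 1} \<le> measure M (\<Union>r<R. loses_best K n r)"
    using shvv_out_ne_best_subset[of K n] K2 sets_loses_best
    by (intro Mp.finite_measure_mono) (auto simp: R_def space_sample_space)
  also have "\<dots> \<le> (\<Sum>r<R. Mp.prob (loses_best K n r))"
    using sets_loses_best by (intro Mp.finite_measure_subadditive_finite) auto
  also have "\<dots> \<le> (\<Sum>r<R. 3 * exp (- ((real n - 2 * (real K * log 2 (real K)))
      / (4 * (log 2 (real K) * var_hardness D K)))))"
    by (intro sum_mono prob_loses_best_exp_le[OF budget])
  finally show ?thesis
    by (simp add: R_def)
qed

theorem prob_shvv_out_ne_best_le: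
  assumes budget: "real K * log 2 (real K) \<le> real n"
  shows "measure M {\<omega> \<in> space M. shvv_out K n \<omega> \<noteq> 1}
    \<le> 3 * log 2 (real K) * exp (- (real n - real K * log 2 (real K))\<^sup>2
          / (8 * real n * (log 2 (real K) * var_hardness D K)))"
    (is "_ \<le> ?B")
proof (cases "?B < 1")
  case True
  define L where "L = log 2 (real K)"
  have L: "L \<ge> 1" unfolding L_def using K2 by simp
  have "3 * real (nat \<lceil>L\<rceil>) * exp (- (real n - 2 * (real K * L)) / (4 * (L * var_hardness D K))) \<le> ?B"
    unfolding L_def[symmetric]
  proof (rule exp_linear_le_exp_quadratic)
    show "0 < real K * L"
      using K2 L by simp
    show "real K * L \<le> real n"
      using budget by (simp add: L_def)
    show "real K * L \<le> L * var_hardness D K"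
      using card_le_var_hardness L by (simp add: mult.commute mult_right_mono)
    show "real (nat \<lceil>L\<rceil>) \<le> L + 1"
      using L by linarith
    show "3 * L * exp (- (real n - real K * L)\<^sup>2 / (8 * real n * (L * var_hardness D K))) < 1"
      using True by (simp add: L_def)
  qed (use L in simp_all)
  with prob_shvv_out_ne_best_le_rounds[OF budget] show ?thesis
    unfolding L_def minus_divide_left by (rule order_trans)
next
  case False
  then show ?thesis using Mp.prob_le_1[of "{\<omega> \<in> space M. shvv_out K n \<omega> \<noteq> 1}"] by linarith
qed

end

theorem theorem3:
  fixes K n :: nat and D :: "nat \<Rightarrow> real measure"
  assumes K2: "K \<ge> 2"
    and prob: "\<And>i. i \<in> {1..K} \<Longrightarrow> prob_space (D i)"
    and borel: "\<And>i. i \<in> {1..K} \<Longrightarrow> sets (D i) = sets borel"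
    and supp: "\<And>i. i \<in> {1..K} \<Longrightarrow> AE x in D i. x \<in> {0..1}"
    and best: "arm_var D 1 > arm_var D 2"
    and sorted: "\<And>i. i \<in> {2..<K} \<Longrightarrow> arm_var D (Suc i) \<le> arm_var D i"
    and budget: "real K * log 2 (real K) \<le> real n"
  shows "measure (sample_space K D) {\<omega> \<in> space (sample_space K D). shvv_out K n \<omega> \<noteq> 1}
     \<le> 3 * log 2 (real K) * exp (- (real n - real K * log 2 (real K))\<^sup>2
          / (8 * real n * log 2 (real K)
             * Max ((\<lambda>i. real i / (arm_var D 1 - arm_var D i)\<^sup>2) ` {2..K})))"
proof -
  interpret sorted_arms K D
    unfolding sorted_arms_def sorted_arms_axioms_def bounded_arms_def
    using K2 prob borel supp best sorted by blast
  show ?thesis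
    using prob_shvv_out_ne_best_le[OF budget] by (simp add: var_hardness_def mult.assoc)
qed

end
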